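(* Let $A, B, C \in \mathbb{C}^{m\times n}$. The $\top$-Stein matrix equation $$X = A X^\top B + C$$ has a unique solution $X \in \mathbb{C}^{m\times n}$ if and only if both of the following conditions hold: (i) for every $\lambda \in \sigma(A^\top B)$ with $\lambda \neq -1$ and $\lambda \neq 0$, one has $\dfrac{1}{\lambda} \notin \sigma(A^\top B)$; (ii) if $-1 \in \sigma(A^\top B)$, then $-1$ is a simple eigenvalue of $A^\top B$.
   Context: For a square matrix $M$, $\sigma(M)$ denotes the set of eigenvalues of $M$. Here $X^\top$ denotes the (ordinary, non-conjugate) transpose of $X$, also for complex matrices. A simple eigenvalue is one of algebraic multiplicity one. *)

theory Defs
  imports "Jordan_Normal_Form.Spectral_Radius"
begin

definition alg_mult :: "complex mat \<Rightarrow> complex \<Rightarrow> nat" where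
  "alg_mult M e = order e (char_poly M)"

definition simple_eigenvalue :: "complex mat \<Rightarrow> complex \<Rightarrow> bool" where
  "simple_eigenvalue M e \<longleftrightarrow> alg_mult M e = 1"

end

theory Submission
  imports Defs
begin

text \<open>Since \<open>X \<mapsto> X - A X\<^sup>T B\<close> is linear on \<open>m \<times> n\<close> matrices, the equation is uniquely solvable iff
  \<open>X = A X\<^sup>T B\<close> has only the trivial solution. Nonzero solutions \<open>X\<close> correspond to nonzero
  \<open>W = B\<^sup>T X\<close> (with inverse \<open>W \<mapsto> A W\<^sup>T\<close>) satisfying \<open>W\<^sup>T = W M\<close> for \<open>M = A\<^sup>T B\<close>. This equation is
  transported along a similarity \<open>M = P T P\<^sup>-\<^sup>1\<close> by the congruence \<open>W \<mapsto> P\<^sup>T W P\<close>, so by Schur's theorem \<open>M\<close>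
  may be replaced by an upper triangular \<open>T\<close> carrying the eigenvalues \<open>\<lambda>\<^sub>1, \<dots>, \<lambda>\<^sub>n\<close> on its diagonal in any
  chosen order. Comparing the entries \<open>(i, j)\<close> and \<open>(j, i)\<close> of \<open>W\<^sup>T = W T\<close>, by induction on \<open>i + j\<close>, gives
  \<open>W\<^sub>i\<^sub>j (1 - \<lambda>\<^sub>i \<lambda>\<^sub>j) = 0\<close> for \<open>i \<noteq> j\<close> and \<open>W\<^sub>i\<^sub>i (1 - \<lambda>\<^sub>i) = 0\<close>. Hence only \<open>W = 0\<close> solves it when \<open>1\<close> is
  no eigenvalue and no two eigenvalues, counted with multiplicity, multiply to \<open>1\<close>; this is exactly
  conditions (i) and (ii). Otherwise the offending eigenvalue \<open>1\<close> or pair \<open>\<lambda>, 1/\<lambda>\<close> is put last on the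
  diagonal, and a nonzero solution supported on the trailing \<open>1 \<times> 1\<close> or \<open>2 \<times> 2\<close> block exists.\<close>

section \<open>Linear maps on spaces of matrices\<close>

lemma sum_lessThan_mult_div_mod:
  fixes f :: "nat \<Rightarrow> nat \<Rightarrow> 'a::comm_monoid_add"
  shows "(\<Sum>a<m * n. f (a div n) (a mod n)) = (\<Sum>i<m. \<Sum>j<n. f i j)"
proof (induction m)
  case (Suc m)
  have "(\<Sum>a<Suc m * n. f (a div n) (a mod n))
      = (\<Sum>a<m * n. f (a div n) (a mod n)) + (\<Sum>a\<in>{m * n..<m * n + n}. f (a div n) (a mod n))"
    by (simp add: add.commute sum.atLeastLessThan_concat[of 0, symmetric] lessThan_atLeast0)
  also have "(\<Sum>a\<in>{m * n..<m * n + n}. f (a div n) (a mod n)) = (\<Sum>j<n. f m j)"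
    by (simp add: sum.shift_bounds_nat_ivl[of _ 0 "m * n", simplified] lessThan_atLeast0 add.commute)
  finally show ?case
    using Suc by simp
qed simp

definition vec_of_mat :: "nat \<Rightarrow> nat \<Rightarrow> 'a mat \<Rightarrow> 'a vec" where
  "vec_of_mat m n X = vec (m * n) (\<lambda>a. X $$ (a div n, a mod n))"

definition mat_of_vec :: "nat \<Rightarrow> nat \<Rightarrow> 'a vec \<Rightarrow> 'a mat" where
  "mat_of_vec m n v = mat m n (\<lambda>(i, j). v $ (i * n + j))"

lemma vec_of_mat_carrier [simp]: "vec_of_mat m n X \<in> carrier_vec (m * n)"
  by (simp add: vec_of_mat_def)

lemma mat_of_vec_carrier [simp]: "mat_of_vec m n v \<in> carrier_mat m n"
  by (simp add: mat_of_vec_def)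

lemma row_major_index:
  fixes i j m n :: nat
  assumes "i < m" "j < n"
  shows "i * n + j < m * n" "(i * n + j) div n = i" "(i * n + j) mod n = j"
proof -
  have "i * n + j < Suc i * n"
    using assms by simp
  also have "\<dots> \<le> m * n"
    using assms by (intro mult_right_mono) auto
  finally show "i * n + j < m * n" .
qed (use assms in auto)

lemma row_major_index_inverse:
  fixes a m n :: nat
  assumes "a < m * n"
  shows "a div n < m" "a mod n < n"
proof -
  have "n > 0"
    using assms by (cases n) auto
  then show "a div n < m" "a mod n < n"
    using assms by (auto simp: less_mult_imp_div_less)
qed

lemma mat_of_vec_of_mat [simp]:
  "X \<in> carrier_mat m n \<Longrightarrow> mat_of_vec m n (vec_of_mat m n X) = X"
  by (intro eq_matI) (auto simp: mat_of_vec_def vec_of_mat_def row_major_index)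

lemma vec_of_mat_of_vec [simp]:
  "v \<in> carrier_vec (m * n) \<Longrightarrow> vec_of_mat m n (mat_of_vec m n v) = v"
  by (intro eq_vecI) (auto simp: mat_of_vec_def vec_of_mat_def row_major_index_inverse)

lemma vec_of_mat_zero [simp]: "vec_of_mat m n (0\<^sub>m m n) = 0\<^sub>v (m * n)"
  by (intro eq_vecI) (auto simp: vec_of_mat_def row_major_index_inverse)

lemma vec_of_mat_inj:
  "X \<in> carrier_mat m n \<Longrightarrow> Y \<in> carrier_mat m n \<Longrightarrow> vec_of_mat m n X = vec_of_mat m n Y \<Longrightarrow> X = Y"
  by (metis mat_of_vec_of_mat)

definition row_major_matrix :: "nat \<Rightarrow> nat \<Rightarrow> (nat \<Rightarrow> nat \<Rightarrow> nat \<Rightarrow> nat \<Rightarrow> 'a) \<Rightarrow> 'a mat" where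
  "row_major_matrix m n c = mat (m * n) (m * n) (\<lambda>(a, b). c (a div n) (a mod n) (b div n) (b mod n))"

lemma row_major_matrix_carrier [simp]: "row_major_matrix m n c \<in> carrier_mat (m * n) (m * n)"
  by (simp add: row_major_matrix_def)

lemma row_major_matrix_mult_vec_of_mat:
  fixes f :: "'a::comm_ring_1 mat \<Rightarrow> 'a mat" and c :: "nat \<Rightarrow> nat \<Rightarrow> nat \<Rightarrow> nat \<Rightarrow> 'a"
  assumes f_entry: "\<And>X i j. X \<in> carrier_mat m n \<Longrightarrow> i < m \<Longrightarrow> j < n \<Longrightarrow>
      f X $$ (i, j) = (\<Sum>l<m. \<Sum>k<n. c i j l k * X $$ (l, k))"
    and X: "X \<in> carrier_mat m n"
  shows "row_major_matrix m n c *\<^sub>v vec_of_mat m n X = vec_of_mat m n (f X)"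
proof (rule eq_vecI)
  fix a assume "a < dim_vec (vec_of_mat m n (f X))"
  then have a: "a < m * n"
    by (simp add: vec_of_mat_def)
  have "(row_major_matrix m n c *\<^sub>v vec_of_mat m n X) $ a =
      (\<Sum>b<m * n. c (a div n) (a mod n) (b div n) (b mod n) * X $$ (b div n, b mod n))"
    using a by (simp add: row_major_matrix_def vec_of_mat_def scalar_prod_def lessThan_atLeast0)
  also have "\<dots> = (\<Sum>l<m. \<Sum>k<n. c (a div n) (a mod n) l k * X $$ (l, k))"
    by (rule sum_lessThan_mult_div_mod)
  also have "\<dots> = f X $$ (a div n, a mod n)"
    using a X by (simp add: f_entry row_major_index_inverse)
  finally show "(row_major_matrix m n c *\<^sub>v vec_of_mat m n X) $ a = vec_of_mat m n (f X) $ a"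
    using a by (simp add: vec_of_mat_def)
qed (simp add: vec_of_mat_def row_major_matrix_def)

lemma linear_mat_map_inj_imp_surj:
  fixes f :: "'a::field mat \<Rightarrow> 'a mat" and c :: "nat \<Rightarrow> nat \<Rightarrow> nat \<Rightarrow> nat \<Rightarrow> 'a"
  assumes f: "\<And>X. X \<in> carrier_mat m n \<Longrightarrow> f X \<in> carrier_mat m n"
    and f_entry: "\<And>X i j. X \<in> carrier_mat m n \<Longrightarrow> i < m \<Longrightarrow> j < n \<Longrightarrow>
      f X $$ (i, j) = (\<Sum>l<m. \<Sum>k<n. c i j l k * X $$ (l, k))"
    and inj: "\<And>X. X \<in> carrier_mat m n \<Longrightarrow> f X = 0\<^sub>m m n \<Longrightarrow> X = 0\<^sub>m m n"
    and C: "C \<in> carrier_mat m n"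
  shows "\<exists>X\<in>carrier_mat m n. f X = C"
proof -
  let ?L = "row_major_matrix m n c" and ?vec = "vec_of_mat m n" and ?mat = "mat_of_vec m n"
  note L_vec = row_major_matrix_mult_vec_of_mat[OF f_entry]
  have "det ?L \<noteq> 0"
  proof
    assume "det ?L = 0"
    then obtain v where v: "v \<in> carrier_vec (m * n)" "v \<noteq> 0\<^sub>v (m * n)" "?L *\<^sub>v v = 0\<^sub>v (m * n)"
      using det_0_iff_vec_prod_zero[OF row_major_matrix_carrier[of m n c]] by auto
    have "?vec (f (?mat v)) = ?vec (0\<^sub>m m n)"
      using L_vec[of "?mat v"] v by simp
    then have "?mat v = 0\<^sub>m m n"
      using f[of "?mat v"] inj[of "?mat v"] vec_of_mat_inj[of "f (?mat v)"] by simp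
    then have "v = ?vec (0\<^sub>m m n)"
      using v(1) by (metis vec_of_mat_of_vec)
    with v(2) show False
      by simp
  qed
  then obtain L' where L': "L' \<in> carrier_mat (m * n) (m * n)" "?L * L' = 1\<^sub>m (m * n)"
    using det_non_zero_imp_unit[OF row_major_matrix_carrier[of m n c]] unfolding Units_def ring_mat_def by auto
  define X where "X = ?mat (L' *\<^sub>v ?vec C)"
  have "?vec (f X) = ?L *\<^sub>v (L' *\<^sub>v ?vec C)"
    using L_vec[of X] L' by (simp add: X_def)
  also have "\<dots> = (?L * L') *\<^sub>v ?vec C"
    using assoc_mult_mat_vec[OF row_major_matrix_carrier L'(1) vec_of_mat_carrier] by simp
  also have "\<dots> = ?vec C"
    using L'(2) by simp
  finally have "?vec (f X) = ?vec C" .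
  moreover have "f X \<in> carrier_mat m n"
    using f by (simp add: X_def)
  ultimately have "f X = C"
    using C vec_of_mat_inj by blast
  then show ?thesis
    using mat_of_vec_carrier unfolding X_def by blast
qed

lemma linear_mat_map_diff:
  fixes f :: "'a::comm_ring_1 mat \<Rightarrow> 'a mat" and c :: "nat \<Rightarrow> nat \<Rightarrow> nat \<Rightarrow> nat \<Rightarrow> 'a"
  assumes f: "\<And>X. X \<in> carrier_mat m n \<Longrightarrow> f X \<in> carrier_mat m n"
    and f_entry: "\<And>X i j. X \<in> carrier_mat m n \<Longrightarrow> i < m \<Longrightarrow> j < n \<Longrightarrow>
      f X $$ (i, j) = (\<Sum>l<m. \<Sum>k<n. c i j l k * X $$ (l, k))"
    and X: "X \<in> carrier_mat m n" and Y: "Y \<in> carrier_mat m n"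
  shows "f (X - Y) = f X - f Y"
proof (rule eq_matI)
  fix i j assume "i < dim_row (f X - f Y)" "j < dim_col (f X - f Y)"
  then have ij: "i < m" "j < n"
    using f[OF Y] by auto
  have "f (X - Y) $$ (i, j) = (\<Sum>l<m. \<Sum>k<n. c i j l k * (X - Y) $$ (l, k))"
    using X Y ij by (simp add: f_entry minus_carrier_mat)
  also have "\<dots> = (\<Sum>l<m. \<Sum>k<n. c i j l k * X $$ (l, k) - c i j l k * Y $$ (l, k))"
    using X Y by (intro sum.cong) (auto simp: right_diff_distrib)
  also have "\<dots> = f X $$ (i, j) - f Y $$ (i, j)"
    using X Y ij by (simp add: f_entry sum_subtractf)
  finally show "f (X - Y) $$ (i, j) = (f X - f Y) $$ (i, j)"
    using f[OF X] f[OF Y] ij by simp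
qed (use f[OF minus_carrier_mat[OF Y, of X]] f[OF Y] in simp_all)

lemma linear_mat_map_unique_solution_iff:
  fixes f :: "'a::field mat \<Rightarrow> 'a mat" and c :: "nat \<Rightarrow> nat \<Rightarrow> nat \<Rightarrow> nat \<Rightarrow> 'a"
  assumes f: "\<And>X. X \<in> carrier_mat m n \<Longrightarrow> f X \<in> carrier_mat m n"
    and f_entry: "\<And>X i j. X \<in> carrier_mat m n \<Longrightarrow> i < m \<Longrightarrow> j < n \<Longrightarrow>
      f X $$ (i, j) = (\<Sum>l<m. \<Sum>k<n. c i j l k * X $$ (l, k))"
    and C: "C \<in> carrier_mat m n"
  shows "(\<exists>!X. X \<in> carrier_mat m n \<and> f X = C) \<longleftrightarrow>
    \<not> (\<exists>X\<in>carrier_mat m n. X \<noteq> 0\<^sub>m m n \<and> f X = 0\<^sub>m m n)"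
proof
  assume unique: "\<exists>!X. X \<in> carrier_mat m n \<and> f X = C"
  then obtain X where X: "X \<in> carrier_mat m n" "f X = C"
    by blast
  show "\<not> (\<exists>X\<in>carrier_mat m n. X \<noteq> 0\<^sub>m m n \<and> f X = 0\<^sub>m m n)"
  proof
    assume "\<exists>Y\<in>carrier_mat m n. Y \<noteq> 0\<^sub>m m n \<and> f Y = 0\<^sub>m m n"
    then obtain Y where Y: "Y \<in> carrier_mat m n" "Y \<noteq> 0\<^sub>m m n" "f Y = 0\<^sub>m m n"
      by blast
    have "f (X - Y) = C - 0\<^sub>m m n"
      using linear_mat_map_diff[OF f f_entry X(1) Y(1)] X Y by simp
    also have "\<dots> = C"
      using C by (intro eq_matI) auto
    finally have "f (X - Y) = C" .
    moreover have "X - Y \<in> carrier_mat m n"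
      using Y(1) by (rule minus_carrier_mat)
    ultimately have "X - Y = X"
      using unique X by auto
    have "Y $$ (i, j) = 0" if "i < m" "j < n" for i j
      using arg_cong[OF \<open>X - Y = X\<close>, of "\<lambda>M. M $$ (i, j)"] X(1) Y(1) that by simp
    then have "Y = 0\<^sub>m m n"
      using Y(1) by (intro eq_matI) auto
    with Y(2) show False ..
  qed
next
  assume "\<not> (\<exists>X\<in>carrier_mat m n. X \<noteq> 0\<^sub>m m n \<and> f X = 0\<^sub>m m n)"
  then have inj: "X = 0\<^sub>m m n" if "X \<in> carrier_mat m n" "f X = 0\<^sub>m m n" for X
    using that by blast
  obtain X where X: "X \<in> carrier_mat m n" "f X = C"
    using linear_mat_map_inj_imp_surj[OF f f_entry inj C] by blast
  show "\<exists>!X. X \<in> carrier_mat m n \<and> f X = C"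
  proof (rule ex1I[of _ X])
    fix Y assume "Y \<in> carrier_mat m n \<and> f Y = C"
    then have Y: "Y \<in> carrier_mat m n" "f Y = C"
      by simp_all
    have "f (Y - X) = 0\<^sub>m m n"
      using linear_mat_map_diff[OF f f_entry Y(1) X(1)] Y X C by simp
    then have "Y - X = 0\<^sub>m m n"
      by (rule inj[OF minus_carrier_mat[OF X(1)]])
    show "Y = X"
    proof (rule eq_matI)
      fix i j assume "i < dim_row X" "j < dim_col X"
      then show "Y $$ (i, j) = X $$ (i, j)"
        using arg_cong[OF \<open>Y - X = 0\<^sub>m m n\<close>, of "\<lambda>M. M $$ (i, j)"] X(1) Y by simp
    qed (use X(1) Y in simp_all)
  qed (use X in simp)
qed

section \<open>The \<open>\<top>\<close>-Stein equation and its homogeneous part\<close>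

lemma index_mult_transpose_mult_mat:
  fixes A B X :: "'a::comm_ring_1 mat"
  assumes "A \<in> carrier_mat m n" "B \<in> carrier_mat m n" "X \<in> carrier_mat m n" "i < m" "j < n"
  shows "(A * transpose_mat X * B) $$ (i, j) = (\<Sum>l<m. \<Sum>k<n. A $$ (i, k) * B $$ (l, j) * X $$ (l, k))"
  using assms
  by (simp add: scalar_prod_def lessThan_atLeast0 sum_distrib_left sum_distrib_right
      ac_simps sum.swap[of _ "{0..<m}"])

lemma index_mat_as_double_sum:
  fixes X :: "'a::comm_ring_1 mat"
  assumes "i < m" "j < n"
  shows "X $$ (i, j) = (\<Sum>l<m. \<Sum>k<n. (if l = i \<and> k = j then 1 else 0) * X $$ (l, k))"
proof -
  have "(\<Sum>l<m. \<Sum>k<n. (if l = i \<and> k = j then 1 else 0) * X $$ (l, k))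
      = (\<Sum>l<m. if l = i then X $$ (l, j) else 0)"
    using assms by (intro sum.cong) (auto simp: if_distrib[of "\<lambda>c. c * _"] cong: if_cong)
  then show ?thesis
    using assms by simp
qed

lemma index_transpose_stein_residual:
  fixes A B X :: "'a::comm_ring_1 mat"
  assumes "A \<in> carrier_mat m n" "B \<in> carrier_mat m n" "X \<in> carrier_mat m n" "i < m" "j < n"
  shows "(X - A * transpose_mat X * B) $$ (i, j) =
    (\<Sum>l<m. \<Sum>k<n. ((if l = i \<and> k = j then 1 else 0) - A $$ (i, k) * B $$ (l, j)) * X $$ (l, k))"
proof -
  have "(X - A * transpose_mat X * B) $$ (i, j) = X $$ (i, j) - (A * transpose_mat X * B) $$ (i, j)"
    using assms by simp
  then show ?thesis
    using assms by (simp only: index_mult_transpose_mult_mat index_mat_as_double_sum[of i m j n X]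
        left_diff_distrib sum_subtractf)
qed

lemma eq_add_iff_minus_eq_mat:
  fixes C P X :: "'a::ab_group_add mat"
  assumes "C \<in> carrier_mat m n" "P \<in> carrier_mat m n" "X \<in> carrier_mat m n"
  shows "X = P + C \<longleftrightarrow> X - P = C"
  using assms by (auto simp: mat_eq_iff algebra_simps)

lemma transpose_stein_unique_solution_iff:
  fixes A B C :: "'a::field mat"
  assumes A: "A \<in> carrier_mat m n" and B: "B \<in> carrier_mat m n" and C: "C \<in> carrier_mat m n"
  shows "(\<exists>!X. X \<in> carrier_mat m n \<and> X = A * transpose_mat X * B + C) \<longleftrightarrow>
    \<not> (\<exists>X\<in>carrier_mat m n. X \<noteq> 0\<^sub>m m n \<and> X = A * transpose_mat X * B)"
proof -
  have solution_iff: "X = A * transpose_mat X * B + D \<longleftrightarrow> X - A * transpose_mat X * B = D"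
    if "X \<in> carrier_mat m n" "D \<in> carrier_mat m n" for X D
  proof -
    have "A * transpose_mat X * B \<in> carrier_mat m n"
      using A B that(1) by simp
    then show ?thesis
      by (rule eq_add_iff_minus_eq_mat[OF that(2) _ that(1)])
  qed
  have kernel_iff: "X = A * transpose_mat X * B \<longleftrightarrow> X - A * transpose_mat X * B = 0\<^sub>m m n"
    if "X \<in> carrier_mat m n" for X
    using solution_iff[OF that zero_carrier_mat] A B that by simp
  have "(\<exists>!X. X \<in> carrier_mat m n \<and> X = A * transpose_mat X * B + C) \<longleftrightarrow>
      (\<exists>!X. X \<in> carrier_mat m n \<and> X - A * transpose_mat X * B = C)"
    using C by (simp add: solution_iff cong: conj_cong)
  also have "\<dots> \<longleftrightarrow> \<not> (\<exists>X\<in>carrier_mat m n. X \<noteq> 0\<^sub>m m n \<and> X - A * transpose_mat X * B = 0\<^sub>m m n)"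
  proof (rule linear_mat_map_unique_solution_iff[OF _ index_transpose_stein_residual[OF A B] C])
    fix X :: "'a mat" assume "X \<in> carrier_mat m n"
    then show "X - A * transpose_mat X * B \<in> carrier_mat m n"
      using A B by (intro minus_carrier_mat) simp
  qed
  also have "\<dots> \<longleftrightarrow> \<not> (\<exists>X\<in>carrier_mat m n. X \<noteq> 0\<^sub>m m n \<and> X = A * transpose_mat X * B)"
    using kernel_iff by blast
  finally show ?thesis .
qed

lemma transpose_mult_transpose_mult_mat:
  fixes A B X :: "'a::comm_ring_1 mat"
  assumes A: "A \<in> carrier_mat m n" and B: "B \<in> carrier_mat m n" and X: "X \<in> carrier_mat m n"
  shows "transpose_mat (A * transpose_mat X * B) = transpose_mat B * X * transpose_mat A"
proof -
  have "transpose_mat (A * transpose_mat X * B) = transpose_mat B * transpose_mat (A * transpose_mat X)"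
    using A B X by (intro transpose_mult) auto
  also have "\<dots> = transpose_mat B * (X * transpose_mat A)"
    using A X by (simp add: transpose_mult)
  finally show ?thesis
    using A B X by simp
qed

lemma transpose_stein_kernel_nonzero_iff:
  fixes A B :: "'a::comm_ring_1 mat"
  assumes A: "A \<in> carrier_mat m n" and B: "B \<in> carrier_mat m n"
  shows "(\<exists>X\<in>carrier_mat m n. X \<noteq> 0\<^sub>m m n \<and> X = A * transpose_mat X * B) \<longleftrightarrow>
    (\<exists>W\<in>carrier_mat n n. W \<noteq> 0\<^sub>m n n \<and> transpose_mat W = W * (transpose_mat A * B))"
proof
  assume "\<exists>X\<in>carrier_mat m n. X \<noteq> 0\<^sub>m m n \<and> X = A * transpose_mat X * B"
  then obtain X where X: "X \<in> carrier_mat m n" "X \<noteq> 0\<^sub>m m n" "X = A * transpose_mat X * B"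
    by blast
  define W where "W = transpose_mat B * X"
  have W: "W \<in> carrier_mat n n"
    using B X(1) by (simp add: W_def)
  have WT: "transpose_mat W = transpose_mat X * B"
    using B X(1) by (simp add: W_def transpose_mult)
  also have "\<dots> = transpose_mat B * X * transpose_mat A * B"
    using transpose_mult_transpose_mult_mat[OF A B X(1)] X(3) by simp
  also have "\<dots> = W * (transpose_mat A * B)"
    using A B X(1) by (simp add: W_def assoc_mult_mat[of _ n m _ m _ n] assoc_mult_mat[of _ n m _ n _ n])
  finally have "transpose_mat W = W * (transpose_mat A * B)" .
  moreover have "W \<noteq> 0\<^sub>m n n"
  proof
    assume "W = 0\<^sub>m n n"
    then have "transpose_mat X * B = 0\<^sub>m n n"
      using WT by simp
    then have "A * (transpose_mat X * B) = 0\<^sub>m m n"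
      using A by simp
    with X show False
      using A B by (simp add: assoc_mult_mat[of _ m n _ m _ n])
  qed
  ultimately show "\<exists>W\<in>carrier_mat n n. W \<noteq> 0\<^sub>m n n \<and> transpose_mat W = W * (transpose_mat A * B)"
    using W by blast
next
  assume "\<exists>W\<in>carrier_mat n n. W \<noteq> 0\<^sub>m n n \<and> transpose_mat W = W * (transpose_mat A * B)"
  then obtain W where W: "W \<in> carrier_mat n n" "W \<noteq> 0\<^sub>m n n" "transpose_mat W = W * (transpose_mat A * B)"
    by blast
  define X where "X = A * transpose_mat W"
  have X: "X \<in> carrier_mat m n"
    using A W(1) by (simp add: X_def)
  have XT: "transpose_mat X = W * transpose_mat A"
    using A W(1) by (simp add: X_def transpose_mult)
  have "A * transpose_mat X * B = A * (W * (transpose_mat A * B))"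
    using A B W(1) by (simp add: XT assoc_mult_mat[of _ m n _ n _ n] assoc_mult_mat[of _ n n _ m _ n]
        assoc_mult_mat[of _ m n _ m _ n])
  also have "\<dots> = X"
    using W(3) by (simp add: X_def)
  finally have "X = A * transpose_mat X * B" ..
  moreover have "X \<noteq> 0\<^sub>m m n"
  proof
    assume "X = 0\<^sub>m m n"
    then have "W * transpose_mat A = 0\<^sub>m n m"
      using XT by simp
    then have "W * transpose_mat A * B = 0\<^sub>m n n"
      using B by simp
    then have "transpose_mat W = 0\<^sub>m n n"
      using A B W by (simp add: assoc_mult_mat[of _ n n _ m _ n])
    then have "W = 0\<^sub>m n n"
      by (metis transpose_transpose zero_transpose_mat)
    with W(2) show False ..
  qed
  ultimately show "\<exists>X\<in>carrier_mat m n. X \<noteq> 0\<^sub>m m n \<and> X = A * transpose_mat X * B"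
    using X by blast
qed

section \<open>The equation \<open>W\<^sup>T = W M\<close>\<close>

lemma similar_mat_wit_transpose_eq_mult:
  fixes M T P Q W :: "'a::comm_ring_1 mat"
  assumes sim: "similar_mat_wit M T P Q" and M: "M \<in> carrier_mat n n"
    and W: "W \<in> carrier_mat n n" "W \<noteq> 0\<^sub>m n n" "transpose_mat W = W * M"
  shows "\<exists>U\<in>carrier_mat n n. U \<noteq> 0\<^sub>m n n \<and> transpose_mat U = U * T"
proof -
  note wit = similar_mat_witD2[OF M sim]
  define U where "U = transpose_mat P * W * P"
  have U: "U \<in> carrier_mat n n"
    using wit W by (simp add: U_def)
  have "transpose_mat U = transpose_mat P * transpose_mat W * P"
    using wit W(1) by (simp add: U_def transpose_mult[of _ n n _ n])
  also have "\<dots> = transpose_mat P * W * P * T * (Q * P)"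
    using wit W by (simp add: W(3) assoc_mult_mat[of _ n n _ n _ n])
  also have "\<dots> = U * T"
    using wit W by (simp add: U_def assoc_mult_mat[of _ n n _ n _ n])
  finally have "transpose_mat U = U * T" .
  moreover have "U \<noteq> 0\<^sub>m n n"
  proof
    assume "U = 0\<^sub>m n n"
    have QP: "transpose_mat Q * transpose_mat P = 1\<^sub>m n"
      using wit by (metis transpose_mult transpose_one)
    have "W = (transpose_mat Q * transpose_mat P) * W * (P * Q)"
      using wit W(1) by (simp add: QP)
    also have "\<dots> = transpose_mat Q * U * Q"
      using wit W(1) by (simp add: U_def assoc_mult_mat[of _ n n _ n _ n])
    finally show False
      using \<open>U = 0\<^sub>m n n\<close> wit W by simp
  qed
  ultimately show ?thesis
    using U by blast
qed

lemma similar_mat_wit_transpose_eq_mult_iff: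
  fixes M T P Q :: "'a::comm_ring_1 mat"
  assumes sim: "similar_mat_wit M T P Q" and M: "M \<in> carrier_mat n n"
  shows "(\<exists>W\<in>carrier_mat n n. W \<noteq> 0\<^sub>m n n \<and> transpose_mat W = W * M) \<longleftrightarrow>
    (\<exists>U\<in>carrier_mat n n. U \<noteq> 0\<^sub>m n n \<and> transpose_mat U = U * T)"
  using similar_mat_wit_transpose_eq_mult[OF sim M]
    similar_mat_wit_transpose_eq_mult[OF similar_mat_wit_sym[OF sim] similar_mat_witD2(5)[OF M sim]]
  by blast

lemma index_mult_mat_sum:
  assumes "A \<in> carrier_mat nr n" "B \<in> carrier_mat n nc" "i < nr" "j < nc"
  shows "(A * B) $$ (i, j) = (\<Sum>k<n. A $$ (i, k) * B $$ (k, j))"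
  using assms by (simp add: scalar_prod_def lessThan_atLeast0)

lemma transpose_eq_mult_upper_triangular_entry:
  fixes T U :: "'a::comm_ring_1 mat"
  assumes T: "T \<in> carrier_mat n n" "upper_triangular T" and U: "U \<in> carrier_mat n n"
    and eq: "transpose_mat U = U * T" and i: "i < n" and j: "j < n"
  shows "U $$ (j, i) = U $$ (i, j) * T $$ (j, j) + (\<Sum>k<j. U $$ (i, k) * T $$ (k, j))"
proof -
  have "U $$ (j, i) = (U * T) $$ (i, j)"
    using i j U by (metis eq carrier_matD index_transpose_mat(1))
  also have "\<dots> = (\<Sum>k<n. U $$ (i, k) * T $$ (k, j))"
    by (rule index_mult_mat_sum[OF U T(1) i j])
  also have "\<dots> = (\<Sum>k<Suc j. U $$ (i, k) * T $$ (k, j))"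
    using T j by (intro sum.mono_neutral_right) (auto simp: upper_triangular_def)
  finally show ?thesis
    by (simp add: add.commute)
qed

lemma transpose_eq_mult_upper_triangular_zero:
  fixes T U :: "'a::idom mat"
  assumes T: "T \<in> carrier_mat n n" "upper_triangular T"
    and diag_ne_1: "\<And>i. i < n \<Longrightarrow> T $$ (i, i) \<noteq> 1"
    and diag_prod_ne_1: "\<And>i j. i < n \<Longrightarrow> j < n \<Longrightarrow> i \<noteq> j \<Longrightarrow> T $$ (i, i) * T $$ (j, j) \<noteq> 1"
    and U: "U \<in> carrier_mat n n" and eq: "transpose_mat U = U * T"
  shows "U = 0\<^sub>m n n"
proof -
  have "U $$ (i, j) = 0" if "i < n" "j < n" for i j
    using that
  proof (induction "i + j" arbitrary: i j rule: less_induct)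
    case less
    have "U $$ (i, k) = 0" if "k < j" for k
      using less.hyps[of i k] less.prems that by simp
    then have row_i: "(\<Sum>k<j. U $$ (i, k) * T $$ (k, j)) = 0"
      by simp
    have "U $$ (j, k) = 0" if "k < i" for k
      using less.hyps[of j k] less.prems that by simp
    then have row_j: "(\<Sum>k<i. U $$ (j, k) * T $$ (k, i)) = 0"
      by simp
    have ji: "U $$ (j, i) = U $$ (i, j) * T $$ (j, j)"
      using transpose_eq_mult_upper_triangular_entry[OF T U eq less.prems] row_i by simp
    have ij: "U $$ (i, j) = U $$ (j, i) * T $$ (i, i)"
      using transpose_eq_mult_upper_triangular_entry[OF T U eq less.prems(2,1)] row_j by simp
    show ?case
    proof (cases "i = j")
      case True
      then have "U $$ (i, j) * (1 - T $$ (i, i)) = 0"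
        using ij by (simp add: algebra_simps)
      then show ?thesis
        using diag_ne_1[OF less.prems(1)] by simp
    next
      case False
      have "U $$ (i, j) * (1 - T $$ (i, i) * T $$ (j, j)) = 0"
        using ij ji by (simp add: algebra_simps)
      then show ?thesis
        using diag_prod_ne_1[OF less.prems False] by simp
    qed
  qed
  then show ?thesis
    using U by (intro eq_matI) auto
qed

lemma upper_triangular_last_diag_one_transpose_eq_mult:
  fixes T :: "'a::comm_ring_1 mat"
  assumes T: "T \<in> carrier_mat (Suc n) (Suc n)" "upper_triangular T" and last: "T $$ (n, n) = 1"
  shows "\<exists>U\<in>carrier_mat (Suc n) (Suc n). U \<noteq> 0\<^sub>m (Suc n) (Suc n) \<and> transpose_mat U = U * T"
proof -
  define U :: "'a mat" where "U = mat (Suc n) (Suc n) (\<lambda>(i, j). if i = n \<and> j = n then 1 else 0)"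
  have U: "U \<in> carrier_mat (Suc n) (Suc n)"
    by (simp add: U_def)
  have "transpose_mat U = U * T"
  proof (rule eq_matI)
    fix i j assume "i < dim_row (U * T)" "j < dim_col (U * T)"
    then have i: "i < Suc n" and j: "j < Suc n"
      using U T by auto
    have "(U * T) $$ (i, j) = (\<Sum>k\<in>{n}. U $$ (i, k) * T $$ (k, j))"
      unfolding index_mult_mat_sum[OF U T(1) i j]
      using i by (intro sum.mono_neutral_right) (auto simp: U_def)
    also have "\<dots> = transpose_mat U $$ (i, j)"
      using T i j last by (auto simp: U_def upper_triangular_def less_Suc_eq)
    finally show "transpose_mat U $$ (i, j) = (U * T) $$ (i, j)" ..
  qed (use U T in auto)
  moreover have "U \<noteq> 0\<^sub>m (Suc n) (Suc n)"
  proof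
    assume "U = 0\<^sub>m (Suc n) (Suc n)"
    then have "U $$ (n, n) = 0"
      by simp
    then show False
      by (simp add: U_def)
  qed
  ultimately show ?thesis
    using U by blast
qed

lemma upper_triangular_last_diags_reciprocal_transpose_eq_mult:
  fixes T :: "'a::field mat"
  assumes T: "T \<in> carrier_mat (Suc (Suc n)) (Suc (Suc n))" "upper_triangular T"
    and reciprocal: "T $$ (n, n) * T $$ (Suc n, Suc n) = 1" and last_ne_1: "T $$ (Suc n, Suc n) \<noteq> 1"
  shows "\<exists>U\<in>carrier_mat (Suc (Suc n)) (Suc (Suc n)). U \<noteq> 0\<^sub>m (Suc (Suc n)) (Suc (Suc n)) \<and> transpose_mat U = U * T"
proof -
  let ?N = "Suc (Suc n)" and ?y = "T $$ (Suc n, Suc n)"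
  \<comment> \<open>Given \<open>U(n, n + 1) = 1\<close>, entry \<open>(n + 1, n)\<close> of \<open>U\<^sup>T = U T\<close> forces \<open>U(n + 1, n) = 1 / T(n, n) = y\<close>,
    and entry \<open>(n + 1, n + 1)\<close> determines \<open>U(n + 1, n + 1) = d\<close> because \<open>y \<noteq> 1\<close>.\<close>
  define d where "d = ?y * T $$ (n, Suc n) / (1 - ?y)"
  have d: "d = ?y * T $$ (n, Suc n) + d * ?y"
    using last_ne_1 by (simp add: d_def field_simps)
  define U :: "'a mat" where "U = mat ?N ?N (\<lambda>(i, j).
    if i = n \<and> j = Suc n then 1 else if i = Suc n \<and> j = n then ?y
    else if i = Suc n \<and> j = Suc n then d else 0)"
  have U: "U \<in> carrier_mat ?N ?N"
    by (simp add: U_def)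
  have "transpose_mat U = U * T"
  proof (rule eq_matI)
    fix i j assume "i < dim_row (U * T)" "j < dim_col (U * T)"
    then have i: "i < ?N" and j: "j < ?N"
      using U T by auto
    have "(U * T) $$ (i, j) = (\<Sum>k\<in>{n, Suc n}. U $$ (i, k) * T $$ (k, j))"
      unfolding index_mult_mat_sum[OF U T(1) i j]
      using i by (intro sum.mono_neutral_right) (auto simp: U_def)
    also have "\<dots> = transpose_mat U $$ (i, j)"
      using T i j reciprocal d by (auto simp: U_def upper_triangular_def mult.commute less_Suc_eq)
    finally show "transpose_mat U $$ (i, j) = (U * T) $$ (i, j)" ..
  qed (use U T in auto)
  moreover have "U \<noteq> 0\<^sub>m ?N ?N"
  proof
    assume "U = 0\<^sub>m ?N ?N"
    then have "U $$ (n, Suc n) = 0"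
      by simp
    then show False
      by (simp add: U_def)
  qed
  ultimately show ?thesis
    using U by blast
qed

section \<open>Eigenvalues counted with multiplicity\<close>

lemma proots_prod_linear_factors:
  "proots (\<Prod>a\<leftarrow>as. [:- a, 1:]) = mset (as :: 'a::idom list)"
proof (induction as)
  case (Cons a as)
  have "(\<Prod>a\<leftarrow>as. [:- a, 1:]) \<noteq> (0 :: 'a poly)"
    by (auto simp: prod_list_zero_iff)
  then show ?case
    using Cons.IH by (simp add: proots_mult del: mult_pCons_left)
qed simp

lemma char_poly_eq_prod_linear_factors:
  fixes M :: "complex mat"
  assumes "M \<in> carrier_mat n n" and "mset es = proots (char_poly M)"
  shows "char_poly M = (\<Prod>a\<leftarrow>es. [:- a, 1:])"
proof -
  obtain as where cp: "char_poly M = (\<Prod>a\<leftarrow>as. [:- a, 1:])"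
    using char_poly_factorized[OF assms(1)] by blast
  then have "mset es = mset as"
    using assms(2) by (simp add: proots_prod_linear_factors)
  then show ?thesis
    unfolding cp by (metis mset_map prod_mset_prod_list)
qed

lemma spectrum_eq_set_proots_char_poly:
  assumes "(M :: 'a::field mat) \<in> carrier_mat n n"
  shows "spectrum M = set_mset (proots (char_poly M))"
proof -
  have "char_poly M \<noteq> 0"
    using degree_monic_char_poly[OF assms] by auto
  then show ?thesis
    using spectrum_root_char_poly[OF assms] by simp
qed

lemma alg_mult_eq_count_proots:
  assumes "(M :: complex mat) \<in> carrier_mat n n"
  shows "alg_mult M e = count (proots (char_poly M)) e"
proof -
  have "char_poly M \<noteq> 0"
    using degree_monic_char_poly[OF assms] by auto
  then show ?thesis
    by (simp add: alg_mult_def)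
qed

definition reciprocal_pair_free :: "'a::field multiset \<Rightarrow> bool" where
  "reciprocal_pair_free E \<longleftrightarrow> 1 \<notin># E \<and> (\<forall>x y. {#x, y#} \<subseteq># E \<longrightarrow> x * y \<noteq> 1)"

lemma reciprocal_pair_free_iff:
  fixes E :: "'a::field_char_0 multiset"
  shows "reciprocal_pair_free E \<longleftrightarrow>
    (\<forall>x\<in>#E. x \<noteq> -1 \<and> x \<noteq> 0 \<longrightarrow> 1 / x \<notin># E) \<and> (-1 \<in># E \<longrightarrow> count E (-1) = 1)"
proof
  assume free: "reciprocal_pair_free E"
  have "1 / x \<notin># E" if "x \<in># E" "x \<noteq> -1" "x \<noteq> 0" for x
  proof
    assume inv: "1 / x \<in># E"
    have "x \<noteq> 1 / x"
    proof
      assume "x = 1 / x"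
      then have "x = 1 \<or> x = -1"
        using \<open>x \<noteq> 0\<close> square_eq_1_iff[of x] by (simp add: field_simps)
      then show False
        using free that by (auto simp: reciprocal_pair_free_def)
    qed
    then have "{#x, 1 / x#} \<subseteq># E"
      using that(1) inv by (simp add: insert_subset_eq_iff in_diff_count)
    moreover have "x * (1 / x) = 1"
      using \<open>x \<noteq> 0\<close> by simp
    ultimately show False
      using free unfolding reciprocal_pair_free_def by blast
  qed
  moreover have "count E (-1) = 1" if "-1 \<in># E"
  proof (rule ccontr)
    assume "count E (-1) \<noteq> 1"
    moreover have "count E (-1) > 0"
      using that by simp
    ultimately have "count E (-1) \<ge> 2"
      by linarith
    then have "{#-1, -1#} \<subseteq># E"
      by (simp add: subseteq_mset_def numeral_2_eq_2)
    moreover have "(-1) * (-1) = (1 :: 'a)"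
      by simp
    ultimately show False
      using free unfolding reciprocal_pair_free_def by blast
  qed
  ultimately show "(\<forall>x\<in>#E. x \<noteq> -1 \<and> x \<noteq> 0 \<longrightarrow> 1 / x \<notin># E) \<and> (-1 \<in># E \<longrightarrow> count E (-1) = 1)"
    by blast
next
  assume cond: "(\<forall>x\<in>#E. x \<noteq> -1 \<and> x \<noteq> 0 \<longrightarrow> 1 / x \<notin># E) \<and> (-1 \<in># E \<longrightarrow> count E (-1) = 1)"
  have "x * y \<noteq> 1" if "{#x, y#} \<subseteq># E" for x y
  proof
    assume xy: "x * y = 1"
    then have "x \<noteq> 0"
      by auto
    with xy have y: "y = 1 / x"
      by (simp add: eq_divide_eq mult.commute)
    show False
    proof (cases "x = -1")
      case True
      then have "count E (-1) \<ge> 2"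
        using mset_subset_eq_count[OF that, of "-1"] y by simp
      then show False
        using cond not_in_iff[of "-1" E] by auto
    next
      case False
      have "x \<in># E" "y \<in># E"
        using mset_subset_eqD[OF that] by auto
      then show False
        using cond False \<open>x \<noteq> 0\<close> y by blast
    qed
  qed
  moreover have "1 \<notin># E"
    using cond by fastforce
  ultimately show "reciprocal_pair_free E"
    by (simp add: reciprocal_pair_free_def)
qed

lemma mset_nth_pair_subseteq:
  assumes "i < length xs" "j < length xs" "i \<noteq> j"
  shows "{#xs ! i, xs ! j#} \<subseteq># mset xs"
proof -
  have "{#i, j#} \<subseteq># mset [0..<length xs]"
    using assms by (auto simp: subseteq_mset_def)
  then have "image_mset ((!) xs) {#i, j#} \<subseteq># image_mset ((!) xs) (mset [0..<length xs])"
    by (rule image_mset_subseteq_mono)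
  then show ?thesis
    by (metis map_nth mset_map image_mset_add_mset image_mset_single)
qed

lemma not_reciprocal_pair_free_cases:
  fixes E :: "'a::field multiset"
  assumes "\<not> reciprocal_pair_free E"
  obtains (last_one) r where "mset (r @ [1]) = E"
    | (last_pair) r x y where "mset (r @ [x, y]) = E" "x * y = 1" "y \<noteq> 1"
proof (cases "1 \<in># E")
  case True
  obtain r where "mset r = E - {#1#}"
    using ex_mset by blast
  then have "mset (r @ [1]) = E"
    using True by (simp add: insert_DiffM)
  then show ?thesis
    by (rule last_one)
next
  case False
  then obtain x y where xy: "{#x, y#} \<subseteq># E" "x * y = 1"
    using assms by (auto simp: reciprocal_pair_free_def)
  have "y \<in># E"
    using mset_subset_eqD[OF xy(1)] by simp
  then have "y \<noteq> 1"
    using False by blast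
  obtain r where "mset r = E - {#x, y#}"
    using ex_mset by blast
  then have "mset (r @ [x, y]) = (E - {#x, y#}) + {#x, y#}"
    by simp
  also have "\<dots> = E"
    using xy(1) by (rule subset_mset.diff_add)
  finally have "mset (r @ [x, y]) = E" .
  then show ?thesis
    using last_pair xy(2) \<open>y \<noteq> 1\<close> by blast
qed

lemma transpose_eq_mult_triangularization:
  fixes M :: "complex mat"
  assumes M: "M \<in> carrier_mat n n" and es: "mset es = proots (char_poly M)"
  obtains T where "T \<in> carrier_mat n n" "upper_triangular T" "diag_mat T = es"
    "(\<exists>W\<in>carrier_mat n n. W \<noteq> 0\<^sub>m n n \<and> transpose_mat W = W * M) \<longleftrightarrow>
     (\<exists>U\<in>carrier_mat n n. U \<noteq> 0\<^sub>m n n \<and> transpose_mat U = U * T)"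
proof -
  obtain T P Q where "schur_decomposition M es = (T, P, Q)"
    by (cases "schur_decomposition M es") auto
  then have T: "similar_mat_wit M T P Q" "upper_triangular T" "diag_mat T = es"
    using schur_decomposition[OF M char_poly_eq_prod_linear_factors[OF M es]] by blast+
  show ?thesis
    using that similar_mat_witD2(5)[OF M T(1)] T similar_mat_wit_transpose_eq_mult_iff[OF T(1) M]
    by blast
qed

lemma upper_triangular_transpose_eq_mult_trivial:
  fixes T :: "'a::field mat"
  assumes T: "T \<in> carrier_mat n n" "upper_triangular T"
    and free: "reciprocal_pair_free (mset (diag_mat T))"
  shows "\<not> (\<exists>U\<in>carrier_mat n n. U \<noteq> 0\<^sub>m n n \<and> transpose_mat U = U * T)"
proof -
  have diag: "length (diag_mat T) = n" "\<And>i. i < n \<Longrightarrow> diag_mat T ! i = T $$ (i, i)"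
    using T(1) by (auto simp: diag_mat_def)
  have "T $$ (i, i) \<noteq> 1" if "i < n" for i
  proof -
    have "T $$ (i, i) \<in># mset (diag_mat T)"
      using diag that by (metis nth_mem set_mset_mset)
    then show ?thesis
      using free by (auto simp: reciprocal_pair_free_def)
  qed
  moreover have "T $$ (i, i) * T $$ (j, j) \<noteq> 1" if "i < n" "j < n" "i \<noteq> j" for i j
    using free mset_nth_pair_subseteq[of i "diag_mat T" j] diag that
    by (auto simp: reciprocal_pair_free_def)
  ultimately show ?thesis
    using transpose_eq_mult_upper_triangular_zero[OF T] by blast
qed

lemma transpose_eq_mult_nonzero_iff:
  fixes M :: "complex mat"
  assumes M: "M \<in> carrier_mat n n"
  shows "(\<exists>W\<in>carrier_mat n n. W \<noteq> 0\<^sub>m n n \<and> transpose_mat W = W * M) \<longleftrightarrow>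
    \<not> reciprocal_pair_free (proots (char_poly M))"
    (is "?nonzero \<longleftrightarrow> \<not> reciprocal_pair_free ?E")
proof
  assume ?nonzero
  obtain es where es: "mset es = ?E"
    using ex_mset by blast
  obtain T where "T \<in> carrier_mat n n" "upper_triangular T" "diag_mat T = es"
    "?nonzero \<longleftrightarrow> (\<exists>U\<in>carrier_mat n n. U \<noteq> 0\<^sub>m n n \<and> transpose_mat U = U * T)"
    using transpose_eq_mult_triangularization[OF M es] .
  then show "\<not> reciprocal_pair_free ?E"
    using upper_triangular_transpose_eq_mult_trivial \<open>?nonzero\<close> es by metis
next
  assume "\<not> reciprocal_pair_free ?E"
  then show ?nonzero
  proof (cases rule: not_reciprocal_pair_free_cases)
    case (last_one r)
    obtain T where T: "T \<in> carrier_mat n n" "upper_triangular T" "diag_mat T = r @ [1]"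
      and iff: "?nonzero \<longleftrightarrow> (\<exists>U\<in>carrier_mat n n. U \<noteq> 0\<^sub>m n n \<and> transpose_mat U = U * T)"
      using transpose_eq_mult_triangularization[OF M last_one] .
    have "n = Suc (length r)" "T $$ (length r, length r) = 1"
      using T(1) arg_cong[OF T(3), of length] arg_cong[OF T(3), of "\<lambda>d. d ! length r"]
      by (auto simp: diag_mat_def nth_append)
    then show ?thesis
      using upper_triangular_last_diag_one_transpose_eq_mult[of T "length r"] T(1,2) iff by simp
  next
    case (last_pair r x y)
    obtain T where T: "T \<in> carrier_mat n n" "upper_triangular T" "diag_mat T = r @ [x, y]"
      and iff: "?nonzero \<longleftrightarrow> (\<exists>U\<in>carrier_mat n n. U \<noteq> 0\<^sub>m n n \<and> transpose_mat U = U * T)"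
      using transpose_eq_mult_triangularization[OF M last_pair(1)] .
    have "n = Suc (Suc (length r))" "T $$ (length r, length r) = x"
      "T $$ (Suc (length r), Suc (length r)) = y"
      using T(1) arg_cong[OF T(3), of length] arg_cong[OF T(3), of "\<lambda>d. d ! length r"]
        arg_cong[OF T(3), of "\<lambda>d. d ! Suc (length r)"]
      by (auto simp: diag_mat_def nth_append)
    then show ?thesis
      using upper_triangular_last_diags_reciprocal_transpose_eq_mult[of T "length r"] T(1,2) iff last_pair
      by simp
  qed
qed

theorem theorem1:
  fixes A B C :: "complex mat" and m n :: nat
  assumes "A \<in> carrier_mat m n" and "B \<in> carrier_mat m n" and "C \<in> carrier_mat m n"
  shows "(\<exists>!X. X \<in> carrier_mat m n \<and> X = A * transpose_mat X * B + C) \<longleftrightarrow>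
         ((\<forall>ev\<in>spectrum (transpose_mat A * B). ev \<noteq> -1 \<and> ev \<noteq> 0 \<longrightarrow>
             1 / ev \<notin> spectrum (transpose_mat A * B)) \<and>
          (-1 \<in> spectrum (transpose_mat A * B) \<longrightarrow> simple_eigenvalue (transpose_mat A * B) (-1)))"
proof -
  let ?M = "transpose_mat A * B"
  have M: "?M \<in> carrier_mat n n"
    using assms by simp
  have "(\<exists>!X. X \<in> carrier_mat m n \<and> X = A * transpose_mat X * B + C) \<longleftrightarrow>
      \<not> (\<exists>X\<in>carrier_mat m n. X \<noteq> 0\<^sub>m m n \<and> X = A * transpose_mat X * B)"
    by (rule transpose_stein_unique_solution_iff[OF assms])
  also have "\<dots> \<longleftrightarrow> \<not> (\<exists>W\<in>carrier_mat n n. W \<noteq> 0\<^sub>m n n \<and> transpose_mat W = W * ?M)"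
    using transpose_stein_kernel_nonzero_iff[OF assms(1,2)] by simp
  also have "\<dots> \<longleftrightarrow> reciprocal_pair_free (proots (char_poly ?M))"
    using transpose_eq_mult_nonzero_iff[OF M] by simp
  also have "\<dots> \<longleftrightarrow>
      (\<forall>ev\<in>spectrum ?M. ev \<noteq> -1 \<and> ev \<noteq> 0 \<longrightarrow> 1 / ev \<notin> spectrum ?M) \<and>
      (-1 \<in> spectrum ?M \<longrightarrow> simple_eigenvalue ?M (-1))"
    by (simp add: reciprocal_pair_free_iff spectrum_eq_set_proots_char_poly[OF M]
        simple_eigenvalue_def alg_mult_eq_count_proots[OF M])
  finally show ?thesis .
qed

end
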